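(* Let $\mathbf{h}\in\mathbb{C}^{n}$ be a fixed (deterministic) vector and let $\bar{\mathbf{A}}\in\mathbb{C}^{m\times n}$ be a random matrix whose elements are i.i.d. with zero mean and unit variance. Let $\mathbf{v}\sim\mathcal{CN}(\mathbf{0}_{m},\mathbf{I}_{m})$ be independent of $\bar{\mathbf{A}}$, let $\mathbf{y}=\bar{\mathbf{A}}\mathbf{h}+\mathbf{v}$ and $\hat{\mathbf{y}}=\mathrm{Q}(\mathbf{y})$, where $\mathrm{Q}$ is the $B$-bit quantizer described in the context. Let $\mathcal{CV}\subseteq\{1,\dots,m\}$ be an index set, $\mathcal{CV}_{\mathrm{R}}=\mathcal{CV}\cup(\mathcal{CV}+m)\subseteq\{1,\dots,2m\}$, and for $\hat{\mathbf{h}}\in\mathbb{C}^{n}$ define the CV function $$\ell_{\mathcal{CV}}(\hat{\mathbf{h}})=\sum_{i\in\mathcal{CV}_{\mathrm{R}}}\log\left(\Phi\left(\frac{\hat{y}_{\mathrm{R},i}^{\mathrm{up}}-\bar{\mathbf{a}}_{\mathrm{R},i}^{\mathrm{T}}\hat{\mathbf{h}}_{\mathrm{R}}}{\sqrt{1/2}}\right)-\Phi\left(\frac{\hat{y}_{\mathrm{R},i}^{\mathrm{lo}}-\bar{\mathbf{a}}_{\mathrm{R},i}^{\mathrm{T}}\hat{\mathbf{h}}_{\mathrm{R}}}{\sqrt{1/2}}\right)\right).$$ Define $f_{\mathcal{CV}}(\hat{\mathbf{h}})$ as the limit of $\frac{1}{2|\mathcal{CV}|}\ell_{\mathcal{CV}}(\hat{\mathbf{h}})$,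 i.e. $\frac{1}{2|\mathcal{CV}|}\ell_{\mathcal{CV}}(\hat{\mathbf{h}})\to f_{\mathcal{CV}}(\hat{\mathbf{h}})$ in probability as $|\mathcal{CV}|\to\infty$. Then $f_{\mathcal{CV}}(\hat{\mathbf{h}})$ is a concave function of $\hat{\mathbf{h}}$, whose maximum is attained at $\hat{\mathbf{h}}=\mathbf{h}$.
   Context: $\Phi$ is the CDF of the standard normal $\mathcal{N}(0,1)$. Real forms: for a complex vector $\mathbf{x}$, $\mathbf{x}_{\mathrm{R}}=[\mathrm{Re}(\mathbf{x})^{\mathrm{T}},\mathrm{Im}(\mathbf{x})^{\mathrm{T}}]^{\mathrm{T}}$; for a complex matrix $\mathbf{X}$, $\mathbf{X}_{\mathrm{R}}=\begin{bmatrix}\mathrm{Re}(\mathbf{X})&-\mathrm{Im}(\mathbf{X})\\\mathrm{Im}(\mathbf{X})&\mathrm{Re}(\mathbf{X})\end{bmatrix}$. $\bar{\mathbf{a}}_{\mathrm{R},i}$ denotes the transpose of the $i$-th row of $\bar{\mathbf{A}}_{\mathrm{R}}$, and $\hat{y}_{\mathrm{R},i}$ is the $i$-th entry of $\hat{\mathbf{y}}_{\mathrm{R}}$. The $B$-bit quantizer $\mathrm{Q}$ acts elementwise and separately on real and imaginary parts: the real line is partitioned into $2^{B}$ intervals $[t_{j},t_{j+1})$ (with $t_0=-\infty$, $t_{2^B}=+\infty$), each with a quantization point; $\mathrm{Q}$ maps a real number in an interval to that interval's point. For each real entry, $\hat{y}_{\mathrm{R},i}^{\mathrm{lo}}$ and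 $\hat{y}_{\mathrm{R},i}^{\mathrm{up}}$ are the lower and upper thresholds of the interval containing $y_{\mathrm{R},i}$ (equivalently, associated with the quantized value $\hat{y}_{\mathrm{R},i}$). The noise $\mathbf{v}\sim\mathcal{CN}(\mathbf{0},\mathbf{I})$ means each real/imaginary component has variance $1/2$. Logarithms are natural. *)

theory Defs
  imports "HOL-Probability.Probability"
begin

definition Phi :: "real \<Rightarrow> real" where
  "Phi x = measure (density lborel std_normal_density) {..x}"

definition Phi_ext :: "ereal \<Rightarrow> real" where
  "Phi_ext e = (if e = \<infinity> then 1 else if e = -\<infinity> then 0 else Phi (real_of_ereal e))"

(* Real form of a complex vector: x_R = [Re x; Im x], indexed by 'n + 'n
   (Inl j = j-th real part, Inr j = j-th imaginary part). *)
definition vecR :: "complex ^ 'n \<Rightarrow> real ^ ('n + 'n)" where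
  "vecR x = (\<chi> k. case k of Inl j \<Rightarrow> Re (x $ j) | Inr j \<Rightarrow> Im (x $ j))"

(* Rows of the real form A_R = [Re A, -Im A; Im A, Re A] of a complex matrix A
   whose i-th row is  A i.  Real-form row index: Inl i = row i (top block),
   Inr i = row i + m (bottom block). *)
definition rowR :: "(nat \<Rightarrow> complex ^ 'n) \<Rightarrow> nat + nat \<Rightarrow> real ^ ('n + 'n)" where
  "rowR A k = (case k of
      Inl i \<Rightarrow> (\<chi> c. case c of Inl j \<Rightarrow> Re (A i $ j) | Inr j \<Rightarrow> - Im (A i $ j))
    | Inr i \<Rightarrow> (\<chi> c. case c of Inl j \<Rightarrow> Im (A i $ j) | Inr j \<Rightarrow> Re (A i $ j)))"

definition seqR :: "(nat \<Rightarrow> complex) \<Rightarrow> nat + nat \<Rightarrow> real" where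
  "seqR v k = (case k of Inl i \<Rightarrow> Re (v i) | Inr i \<Rightarrow> Im (v i))"

definition thresholds :: "nat \<Rightarrow> (nat \<Rightarrow> ereal) \<Rightarrow> bool" where
  "thresholds B t \<longleftrightarrow> t 0 = -\<infinity> \<and> t (2^B) = \<infinity> \<and>
     (\<forall>j. 0 < j \<and> j < 2^B \<longrightarrow> \<bar>t j\<bar> \<noteq> \<infinity>) \<and>
     (\<forall>j. j < 2^B \<longrightarrow> t j < t (Suc j))"

definition qidx :: "nat \<Rightarrow> (nat \<Rightarrow> ereal) \<Rightarrow> real \<Rightarrow> nat" where
  "qidx B t y = (THE j. j < 2^B \<and> t j \<le> ereal y \<and> ereal y < t (Suc j))"

definition q_lo :: "nat \<Rightarrow> (nat \<Rightarrow> ereal) \<Rightarrow> real \<Rightarrow> ereal" where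
  "q_lo B t y = t (qidx B t y)"

definition q_up :: "nat \<Rightarrow> (nat \<Rightarrow> ereal) \<Rightarrow> real \<Rightarrow> ereal" where
  "q_up B t y = t (Suc (qidx B t y))"

definition ell_CV :: "nat \<Rightarrow> (nat \<Rightarrow> ereal) \<Rightarrow> nat set \<Rightarrow> (nat \<Rightarrow> complex ^ 'n)
     \<Rightarrow> (nat \<Rightarrow> complex) \<Rightarrow> complex ^ 'n \<Rightarrow> complex ^ 'n \<Rightarrow> real" where
  "ell_CV B t CV A v h hh =
     (\<Sum>k \<in> Inl ` CV \<union> Inr ` CV.
        let yR = rowR A k \<bullet> vecR h + seqR v k;
            z = rowR A k \<bullet> vecR hh
        in ln (Phi_ext ((q_up B t yR - ereal z) / ereal (sqrt (1/2)))
             - Phi_ext ((q_lo B t yR - ereal z) / ereal (sqrt (1/2)))))"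

definition conv_in_prob :: "'a measure \<Rightarrow> (nat \<Rightarrow> 'a \<Rightarrow> real) \<Rightarrow> real \<Rightarrow> bool" where
  "conv_in_prob M X c \<longleftrightarrow>
     (\<forall>e>0. (\<lambda>k. measure M {\<omega> \<in> space M. \<bar>X k \<omega> - c\<bar> > e}) \<longlonglongrightarrow> 0)"

end

theory Submission
  imports Defs
begin

text \<open>Every summand of \<open>ell_CV\<close> is the logarithm of the probability that a Gaussian variable,
  centred at a real-linear function of \<open>hh\<close>, falls into a fixed interval.  Gaussian interval
  probabilities are log-concave, so every realisation of \<open>ell_CV\<close> is concave in \<open>hh\<close>, and
  concavity survives limits in probability.

  For the maximum, \<open>exp (ell_CV hh - ell_CV h)\<close> is a product over the rows of likelihood ratios
  of the quantized observations; given the rows of \<open>A\<close> they are independent with mean one, so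
  the product has mean one.  A Chernoff bound then shows that
  \<open>(ell_CV hh - ell_CV h) / (2 * card CV) \<ge> e\<close> has probability at most
  \<open>exp (- 2 * card CV * e)\<close>, which forces \<open>f hh \<le> f h\<close> in the limit.  Only the independence
  and the Gaussian noise enter.\<close>

section \<open>The standard normal distribution function\<close>

abbreviation phi :: "real \<Rightarrow> real" where
  "phi \<equiv> std_normal_density"

lemma real_distribution_std_normal: "real_distribution (density lborel phi)"
  unfolding real_distribution_def real_distribution_axioms_def
  using prob_space_normal_density by auto

lemma Phi_eq_cdf: "Phi = cdf (density lborel phi)"
  by (simp add: Phi_def cdf_def fun_eq_iff)

lemma measure_std_normal:
  assumes "S \<in> sets borel"
  shows "measure (density lborel phi) S = (LBINT x:S. phi x)"
proof -
  have "emeasure (density lborel phi) S = (\<integral>\<^sup>+x. ennreal (indicator S x * phi x) \<partial>lborel)"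
    using assms by (subst emeasure_density) (auto intro!: nn_integral_cong simp: indicator_def)
  also have "\<dots> = ennreal (LBINT x:S. phi x)"
    using integrable_mult_indicator[of S lborel phi] assms
    by (subst nn_integral_eq_integral) (auto simp: set_lebesgue_integral_def)
  finally show ?thesis
    by (simp add: measure_def set_lebesgue_integral_def integral_nonneg_AE)
qed

lemma Phi_diff_eq_interval_integral:
  assumes "a < b"
  shows "Phi b - Phi a = (LBINT x=a..b. phi x)"
proof -
  interpret real_distribution "density lborel phi"
    by (rule real_distribution_std_normal)
  have "Phi b - Phi a = measure (density lborel phi) {a<..b}"
    using cdf_diff_eq[OF assms] by (simp add: Phi_eq_cdf)
  also have "\<dots> = (LBINT x:{a<..b}. phi x)"
    by (rule measure_std_normal) auto
  finally show ?thesis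
    using assms by (simp add: interval_integral_Ioc)
qed

lemma isCont_phi: "isCont phi x"
  unfolding std_normal_density_def by (auto intro!: continuous_intros)

lemma DERIV_Phi: "(Phi has_real_derivative phi x) (at x)"
proof -
  obtain F where F: "\<And>x. (F has_vector_derivative phi x) (at x)"
    using einterval_antiderivative[of "-\<infinity>" "\<infinity>" phi] isCont_phi by auto
  have F_diff: "Phi b - Phi a = F b - F a" if "a < b" for a b
    unfolding Phi_diff_eq_interval_integral[OF that]
    by (rule interval_integral_FTC_finite)
       (auto intro: continuous_at_imp_continuous_on isCont_phi has_vector_derivative_at_within F)
  have Phi_eq: "Phi = (\<lambda>y. F y + (Phi 0 - F 0))"
  proof
    fix y :: real
    consider "y < 0" | "y = 0" | "y > 0" by linarith
    then show "Phi y = F y + (Phi 0 - F 0)"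
      by cases (use F_diff[of y 0] F_diff[of 0 y] in auto)
  qed
  have "(F has_real_derivative phi x) (at x)"
    using F[of x] by (simp add: has_real_derivative_iff_has_vector_derivative)
  then have "((\<lambda>y. F y + (Phi 0 - F 0)) has_real_derivative phi x) (at x)"
    by (auto intro!: derivative_eq_intros)
  then show ?thesis
    by (subst Phi_eq)
qed

lemma DERIV_phi: "(phi has_real_derivative - x * phi x) (at x)"
  unfolding std_normal_density_def
  by (auto intro!: derivative_eq_intros simp: power2_eq_square field_simps)

lemma DERIV_Phi_compose [derivative_intros]:
  "(g has_real_derivative g') (at x within S) \<Longrightarrow> D = phi (g x) * g' \<Longrightarrow>
   ((\<lambda>x. Phi (g x)) has_real_derivative D) (at x within S)"
  using DERIV_chain2[OF DERIV_Phi] by blast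

lemma DERIV_phi_compose [derivative_intros]:
  "(g has_real_derivative g') (at x within S) \<Longrightarrow> D = - g x * phi (g x) * g' \<Longrightarrow>
   ((\<lambda>x. phi (g x)) has_real_derivative D) (at x within S)"
  using DERIV_chain2[OF DERIV_phi] by (simp add: mult.assoc)

lemma phi_pos: "0 < phi x"
  by (simp add: normal_density_pos)

lemma Phi_strict_mono: "x < y \<Longrightarrow> Phi x < Phi y"
  by (rule DERIV_pos_imp_increasing) (auto intro: DERIV_Phi phi_pos)

lemma Phi_mono: "x \<le> y \<Longrightarrow> Phi x \<le> Phi y"
  using Phi_strict_mono[of x y] by (cases "x = y") auto

lemma Phi_at_bot: "(Phi \<longlongrightarrow> 0) at_bot"
proof -
  interpret real_distribution "density lborel phi"
    by (rule real_distribution_std_normal)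
  show ?thesis
    using cdf_lim_at_bot by (simp add: Phi_eq_cdf)
qed

lemma Phi_at_top: "(Phi \<longlongrightarrow> 1) at_top"
proof -
  interpret real_distribution "density lborel phi"
    by (rule real_distribution_std_normal)
  show ?thesis
    using cdf_lim_at_top_prob by (simp add: Phi_eq_cdf)
qed

lemma Phi_pos: "0 < Phi x"
proof -
  have "0 \<le> Phi (x - 1)"
    by (simp add: Phi_def)
  then show ?thesis
    using Phi_strict_mono[of "x - 1" x] by simp
qed

lemma Phi_less_1: "Phi x < 1"
proof -
  interpret real_distribution "density lborel phi"
    by (rule real_distribution_std_normal)
  have "Phi (x + 1) \<le> 1"
    using cdf_bounded_prob by (simp add: Phi_eq_cdf)
  then show ?thesis
    using Phi_strict_mono[of x "x + 1"] by simp
qed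

lemma borel_measurable_Phi [measurable]: "Phi \<in> borel_measurable borel"
  by (intro borel_measurable_continuous_onI continuous_at_imp_continuous_on ballI
      DERIV_isCont[OF DERIV_Phi])

text \<open>Since \<open>phi' u = - u * phi u\<close>, the difference \<open>phi x - phi y\<close> is the integral of
  \<open>u * phi u\<close> over \<open>[x, y]\<close>: the two bounds say that the mean of a standard normal
  variable truncated to \<open>[x, y]\<close> lies in \<open>[x, y]\<close>.\<close>

lemma truncated_std_normal_mean_bounds:
  assumes "x \<le> y"
  shows "x * (Phi y - Phi x) \<le> phi x - phi y" and "phi x - phi y \<le> y * (Phi y - Phi x)"
proof -
  let ?k = "\<lambda>u. phi u - phi y - u * (Phi y - Phi u)"
  have "?k y \<le> ?k x"
  proof (rule DERIV_nonpos_imp_nonincreasing[OF assms])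
    fix u assume "x \<le> u" "u \<le> y"
    have "DERIV ?k u :> - (Phi y - Phi u)"
      by (auto intro!: derivative_eq_intros simp: algebra_simps)
    then show "\<exists>d. DERIV ?k u :> d \<and> d \<le> 0"
      using Phi_mono[OF \<open>u \<le> y\<close>] by auto
  qed
  then show "x * (Phi y - Phi x) \<le> phi x - phi y"
    by simp
next
  let ?k = "\<lambda>u. u * (Phi u - Phi x) - phi x + phi u"
  have "?k x \<le> ?k y"
  proof (rule DERIV_nonneg_imp_nondecreasing[OF assms])
    fix u assume "x \<le> u" "u \<le> y"
    have "DERIV ?k u :> Phi u - Phi x"
      by (auto intro!: derivative_eq_intros simp: algebra_simps)
    then show "\<exists>d. DERIV ?k u :> d \<and> 0 \<le> d"
      using Phi_mono[OF \<open>x \<le> u\<close>] by auto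
  qed
  then show "phi x - phi y \<le> y * (Phi y - Phi x)"
    by simp
qed

section \<open>Log-concavity of Gaussian interval probabilities\<close>

lemma concave_on_compose_linear:
  assumes "concave_on UNIV g" and "linear L"
  shows "concave_on UNIV (\<lambda>x. g (L x))"
  using assms by (auto simp: concave_on_iff linear_add linear_scale)

lemma concave_on_sum_fun:
  assumes "convex S" and "\<And>i. i \<in> I \<Longrightarrow> concave_on S (f i)"
  shows "concave_on S (\<lambda>x. \<Sum>i\<in>I. f i x)"
  using assms(2)
  by (induction I rule: infinite_finite_induct)
     (auto intro: concave_on_add simp: concave_on_const assms(1))

lemma concave_on_ln_if_deriv_ineq:
  fixes G G' G'' :: "real \<Rightarrow> real"
  assumes G: "\<And>w. (G has_real_derivative G' w) (at w)"
    and G': "\<And>w. (G' has_real_derivative G'' w) (at w)"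
    and pos: "\<And>w. 0 < G w"
    and ineq: "\<And>w. G'' w * G w \<le> (G' w)\<^sup>2"
  shows "concave_on UNIV (\<lambda>w. ln (G w))"
proof (rule f''_le0_imp_concave[where f'="\<lambda>w. G' w / G w"
      and f''="\<lambda>w. (G'' w * G w - (G' w)\<^sup>2) / (G w)\<^sup>2"])
  fix w :: real
  show "DERIV (\<lambda>w. ln (G w)) w :> G' w / G w"
    using pos[of w] by (auto intro!: derivative_eq_intros G simp: field_simps)
  show "DERIV (\<lambda>w. G' w / G w) w :> (G'' w * G w - (G' w)\<^sup>2) / (G w)\<^sup>2"
    using pos[of w] by (auto intro!: derivative_eq_intros G G' simp: field_simps power2_eq_square)
  show "(G'' w * G w - (G' w)\<^sup>2) / (G w)\<^sup>2 \<le> 0"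
    using ineq[of w] by (intro divide_nonpos_nonneg) auto
qed auto

lemma concave_on_tendsto:
  fixes g :: "'i \<Rightarrow> 'a::real_vector \<Rightarrow> real"
  assumes "F \<noteq> bot" and "\<forall>\<^sub>F i in F. concave_on UNIV (g i)"
    and "\<And>x. ((\<lambda>i. g i x) \<longlongrightarrow> f x) F"
  shows "concave_on UNIV f"
  unfolding concave_on_iff
proof (intro conjI ballI allI impI)
  fix x y :: 'a and u v :: real
  assume "0 \<le> u" "0 \<le> v" "u + v = 1"
  with assms(2) have "\<forall>\<^sub>F i in F. u * g i x + v * g i y \<le> g i (u *\<^sub>R x + v *\<^sub>R y)"
    by (auto elim!: eventually_mono simp: concave_on_iff)
  moreover have "((\<lambda>i. u * g i x + v * g i y) \<longlongrightarrow> u * f x + v * f y) F"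
    using assms(3) by (intro tendsto_intros)
  ultimately show "u * f x + v * f y \<le> f (u *\<^sub>R x + v *\<^sub>R y)"
    by (intro tendsto_le[OF assms(1) assms(3)])
qed simp

lemma concave_on_ln_Phi_diff:
  assumes "a < b"
  shows "concave_on UNIV (\<lambda>w. ln (Phi (b - w) - Phi (a - w)))"
proof (rule concave_on_ln_if_deriv_ineq)
  fix w
  show "((\<lambda>w. Phi (b - w) - Phi (a - w)) has_real_derivative phi (a - w) - phi (b - w)) (at w)"
    by (auto intro!: derivative_eq_intros)
  show "((\<lambda>w. phi (a - w) - phi (b - w)) has_real_derivative
      (a - w) * phi (a - w) - (b - w) * phi (b - w)) (at w)"
    by (auto intro!: derivative_eq_intros simp: algebra_simps)
  show "0 < Phi (b - w) - Phi (a - w)"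
    using Phi_strict_mono[of "a - w" "b - w"] assms by simp
  define x y where "x = a - w" and "y = b - w"
  have "x \<le> y"
    using assms by (simp add: x_def y_def)
  note bounds = truncated_std_normal_mean_bounds[OF this]
  have "0 \<le> phi x * (phi x - phi y - x * (Phi y - Phi x))"
    using bounds(1) phi_pos[of x] by simp
  moreover have "0 \<le> phi y * (y * (Phi y - Phi x) - (phi x - phi y))"
    using bounds(2) phi_pos[of y] by simp
  ultimately have "(x * phi x - y * phi y) * (Phi y - Phi x) \<le> (phi x - phi y)\<^sup>2"
    by (simp add: algebra_simps power2_eq_square)
  then show "((a - w) * phi (a - w) - (b - w) * phi (b - w)) * (Phi (b - w) - Phi (a - w))
      \<le> (phi (a - w) - phi (b - w))\<^sup>2"
    by (simp add: x_def y_def)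
qed

text \<open>The half-infinite intervals follow by letting the finite endpoint of a bounded one go to
  infinity, since concavity survives pointwise limits.\<close>

lemma concave_on_ln_Phi_ext_diff:
  fixes \<alpha> \<beta> :: ereal
  assumes "\<alpha> < \<beta>"
  shows "concave_on UNIV (\<lambda>w. ln (Phi_ext (\<beta> - ereal w) - Phi_ext (\<alpha> - ereal w)))"
proof (cases \<alpha>; cases \<beta>)
  fix a b assume "\<alpha> = ereal a" "\<beta> = ereal b"
  then show ?thesis
    using concave_on_ln_Phi_diff[of a b] assms by (simp add: Phi_ext_def)
next
  fix a assume "\<alpha> = ereal a" "\<beta> = \<infinity>"
  have "concave_on UNIV (\<lambda>w. ln (1 - Phi (a - w)))"
  proof (rule concave_on_tendsto[OF trivial_limit_at_top_linorder])
    show "\<forall>\<^sub>F b in at_top. concave_on UNIV (\<lambda>w. ln (Phi (b - w) - Phi (a - w)))"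
      using eventually_gt_at_top[of a] by eventually_elim (rule concave_on_ln_Phi_diff)
    fix w :: real
    have "filterlim (\<lambda>b. b - w) at_top at_top"
      unfolding filterlim_at_top eventually_at_top_linorder by (metis le_diff_eq)
    then have "((\<lambda>b. Phi (b - w)) \<longlongrightarrow> 1) at_top"
      by (rule filterlim_compose[OF Phi_at_top])
    then have "((\<lambda>b. Phi (b - w) - Phi (a - w)) \<longlongrightarrow> 1 - Phi (a - w)) at_top"
      by (intro tendsto_intros)
    then show "((\<lambda>b. ln (Phi (b - w) - Phi (a - w))) \<longlongrightarrow> ln (1 - Phi (a - w))) at_top"
      using Phi_less_1[of "a - w"] by (auto intro: tendsto_ln)
  qed
  with \<open>\<alpha> = ereal a\<close> \<open>\<beta> = \<infinity>\<close> show ?thesis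
    by (simp add: Phi_ext_def)
next
  fix b assume "\<alpha> = -\<infinity>" "\<beta> = ereal b"
  have "concave_on UNIV (\<lambda>w. ln (Phi (b - w)))"
  proof (rule concave_on_tendsto[OF trivial_limit_at_bot_linorder])
    show "\<forall>\<^sub>F a in at_bot. concave_on UNIV (\<lambda>w. ln (Phi (b - w) - Phi (a - w)))"
      using eventually_gt_at_bot[of b] by eventually_elim (rule concave_on_ln_Phi_diff)
    fix w :: real
    have "filterlim (\<lambda>a. a - w) at_bot at_bot"
      unfolding filterlim_at_bot eventually_at_bot_linorder by (metis diff_le_eq)
    then have "((\<lambda>a. Phi (a - w)) \<longlongrightarrow> 0) at_bot"
      by (rule filterlim_compose[OF Phi_at_bot])
    then have "((\<lambda>a. Phi (b - w) - Phi (a - w)) \<longlongrightarrow> Phi (b - w) - 0) at_bot"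
      by (intro tendsto_intros)
    then show "((\<lambda>a. ln (Phi (b - w) - Phi (a - w))) \<longlongrightarrow> ln (Phi (b - w))) at_bot"
      using Phi_pos[of "b - w"] by (auto intro: tendsto_ln)
  qed
  with \<open>\<alpha> = -\<infinity>\<close> \<open>\<beta> = ereal b\<close> show ?thesis
    by (simp add: Phi_ext_def)
qed (use assms in \<open>simp_all add: concave_on_const Phi_ext_def\<close>)

section \<open>Independence, exponential moments and convergence in probability\<close>

lemma (in prob_space) nn_integral_indep_var:
  assumes ind: "indep_var S U T V" and F: "F \<in> borel_measurable (S \<Otimes>\<^sub>M T)"
  shows "(\<integral>\<^sup>+\<omega>. F (U \<omega>, V \<omega>) \<partial>M) = (\<integral>\<^sup>+\<omega>. (\<integral>\<^sup>+\<omega>'. F (U \<omega>, V \<omega>') \<partial>M) \<partial>M)"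
proof -
  have U: "random_variable S U" and V: "random_variable T V"
    using ind by (auto dest: indep_var_rv1 indep_var_rv2)
  interpret PV: prob_space "distr M T V"
    by (rule prob_space_distr[OF V])
  have F': "F \<in> borel_measurable (distr M S U \<Otimes>\<^sub>M distr M T V)"
    using F by (simp add: measurable_cong_sets[OF sets_pair_measure_cong[OF sets_distr sets_distr]])
  have inner: "(\<lambda>u. \<integral>\<^sup>+v. F (u, v) \<partial>distr M T V) \<in> borel_measurable (distr M S U)"
    using PV.borel_measurable_nn_integral_fst[OF F'] .
  have "(\<integral>\<^sup>+\<omega>. F (U \<omega>, V \<omega>) \<partial>M) = (\<integral>\<^sup>+p. F p \<partial>distr M (S \<Otimes>\<^sub>M T) (\<lambda>\<omega>. (U \<omega>, V \<omega>)))"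
    by (subst nn_integral_distr) (auto intro: measurable_Pair U V F)
  also have "\<dots> = (\<integral>\<^sup>+p. F p \<partial>(distr M S U \<Otimes>\<^sub>M distr M T V))"
    using ind by (simp add: indep_var_distribution_eq)
  also have "\<dots> = (\<integral>\<^sup>+u. \<integral>\<^sup>+v. F (u, v) \<partial>distr M T V \<partial>distr M S U)"
    by (rule PV.nn_integral_fst[symmetric, OF F'])
  also have "\<dots> = (\<integral>\<^sup>+\<omega>. \<integral>\<^sup>+v. F (U \<omega>, v) \<partial>distr M T V \<partial>M)"
    by (rule nn_integral_distr[OF U inner])
  also have "\<dots> = (\<integral>\<^sup>+\<omega>. (\<integral>\<^sup>+\<omega>'. F (U \<omega>, V \<omega>') \<partial>M) \<partial>M)"
  proof (rule nn_integral_cong)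
    fix \<omega> assume "\<omega> \<in> space M"
    then have "(\<lambda>v. F (U \<omega>, v)) \<in> borel_measurable T"
      using F measurable_space[OF U] by measurable
    then show "(\<integral>\<^sup>+v. F (U \<omega>, v) \<partial>distr M T V) = (\<integral>\<^sup>+\<omega>'. F (U \<omega>, V \<omega>') \<partial>M)"
      by (subst nn_integral_distr[OF V]) auto
  qed
  finally show ?thesis .
qed

lemma (in prob_space) emeasure_ge_le_exp_nn_integral:
  assumes "D \<in> borel_measurable M"
  shows "emeasure M {\<omega> \<in> space M. c \<le> D \<omega>} \<le> ennreal (exp (- c)) * (\<integral>\<^sup>+\<omega>. ennreal (exp (D \<omega>)) \<partial>M)"
proof -
  have "{\<omega> \<in> space M. c \<le> D \<omega>} = {\<omega> \<in> space M. 1 \<le> ennreal (exp (- c)) * ennreal (exp (D \<omega>))}"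
    by (auto simp: ennreal_mult[symmetric] exp_add[symmetric])
  also have "emeasure M \<dots> \<le>
      ennreal (exp (- c)) * (\<integral>\<^sup>+\<omega>. ennreal (exp (D \<omega>)) * indicator (space M) \<omega> \<partial>M)"
    using assms by (intro nn_integral_Markov_inequality) auto
  also have "(\<integral>\<^sup>+\<omega>. ennreal (exp (D \<omega>)) * indicator (space M) \<omega> \<partial>M) =
      (\<integral>\<^sup>+\<omega>. ennreal (exp (D \<omega>)) \<partial>M)"
    by (intro nn_integral_cong) simp
  finally show ?thesis .
qed

lemma exp_neg_mult_tendsto_0:
  fixes N :: "'a \<Rightarrow> real"
  assumes "filterlim N at_top F" and "0 < c"
  shows "((\<lambda>k. exp (- (c * N k))) \<longlongrightarrow> 0) F"
proof -
  have "filterlim (\<lambda>k. - c * N k) at_bot F"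
    using assms by (intro filterlim_tendsto_neg_mult_at_bot[OF tendsto_const]) auto
  then show ?thesis
    using filterlim_compose[OF exp_at_bot] by simp
qed

lemma (in prob_space) tendsto_prob_Un_0:
  assumes "\<And>k. E k \<in> events" and "\<And>k. F k \<in> events"
    and "(\<lambda>k. prob (E k)) \<longlonglongrightarrow> 0" and "(\<lambda>k. prob (F k)) \<longlonglongrightarrow> 0"
  shows "(\<lambda>k. prob (E k \<union> F k)) \<longlonglongrightarrow> 0"
proof (rule tendsto_sandwich[OF _ _ tendsto_const])
  show "\<forall>\<^sub>F k in sequentially. prob (E k \<union> F k) \<le> prob (E k) + prob (F k)"
    using assms(1,2) by (simp add: measure_subadditive)
  show "(\<lambda>k. prob (E k) + prob (F k)) \<longlonglongrightarrow> 0"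
    using tendsto_add[OF assms(3,4)] by simp
qed simp

lemma (in prob_space) ex_notin_if_prob_tendsto_0:
  assumes "\<And>k. E k \<in> events" and "(\<lambda>k. prob (E k)) \<longlonglongrightarrow> 0"
  shows "\<exists>k. \<exists>\<omega>\<in>space M. \<omega> \<notin> E k"
proof -
  have "\<forall>\<^sub>F k in sequentially. prob (E k) < 1"
    using order_tendstoD(2)[OF assms(2)] by simp
  then obtain k where "prob (E k) < 1"
    by (auto simp: eventually_sequentially)
  moreover have "prob (E k) = 1" if "space M \<subseteq> E k"
    using finite_measure_mono[OF that assms(1)] prob_space by (simp add: measure_le_1 antisym)
  ultimately show ?thesis
    by auto
qed

lemma (in prob_space) concave_on_conv_in_prob:
  fixes X :: "nat \<Rightarrow> 'a \<Rightarrow> 'b::real_vector \<Rightarrow> real"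
  assumes meas: "\<And>k z. (\<lambda>\<omega>. X k \<omega> z) \<in> borel_measurable M"
    and concave: "\<And>k \<omega>. concave_on UNIV (X k \<omega>)"
    and conv: "\<And>z. conv_in_prob M (\<lambda>k \<omega>. X k \<omega> z) (f z)"
  shows "concave_on UNIV f"
  unfolding concave_on_iff
proof (intro conjI ballI allI impI)
  fix x y :: 'b and u v :: real
  assume uv: "0 \<le> u" "0 \<le> v" "u + v = 1"
  let ?m = "u *\<^sub>R x + v *\<^sub>R y"
  show "u * f x + v * f y \<le> f ?m"
  proof (rule field_le_epsilon)
    fix e :: real assume "0 < e"
    define d where "d = e / 2"
    have "0 < d"
      using \<open>0 < e\<close> by (simp add: d_def)
    define bad where "bad k z = {\<omega> \<in> space M. d < \<bar>X k \<omega> z - f z\<bar>}" for k z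
    have bad_events: "bad k z \<in> events" for k z
      unfolding bad_def using meas[of k z] by measurable
    have "(\<lambda>k. prob (bad k z)) \<longlonglongrightarrow> 0" for z
      using conv[of z] \<open>0 < d\<close> unfolding conv_in_prob_def bad_def by blast
    then have "(\<lambda>k. prob (bad k x \<union> bad k y \<union> bad k ?m)) \<longlonglongrightarrow> 0"
      by (intro tendsto_prob_Un_0 sets.Un bad_events)
    then have "\<exists>k. \<exists>\<omega>\<in>space M. \<omega> \<notin> bad k x \<union> bad k y \<union> bad k ?m"
      by (intro ex_notin_if_prob_tendsto_0 sets.Un bad_events)
    then obtain k \<omega> where "\<omega> \<in> space M" and "\<omega> \<notin> bad k x \<union> bad k y \<union> bad k ?m"
      by blast
    then have fx: "f x \<le> X k \<omega> x + d" and fy: "f y \<le> X k \<omega> y + d"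
      and fm: "X k \<omega> ?m \<le> f ?m + d"
      by (auto simp: bad_def not_less abs_le_iff)
    have "u * f x + v * f y \<le> u * (X k \<omega> x + d) + v * (X k \<omega> y + d)"
      using fx fy uv by (intro add_mono mult_left_mono) simp_all
    also have "\<dots> = u * X k \<omega> x + v * X k \<omega> y + (u + v) * d"
      by (simp add: algebra_simps)
    also have "\<dots> \<le> X k \<omega> ?m + d"
      using concave[of k \<omega>] uv by (simp add: concave_on_iff)
    also have "\<dots> \<le> f ?m + e"
      using fm by (simp add: d_def)
    finally show "u * f x + v * f y \<le> f ?m + e" .
  qed
qed simp

lemma (in prob_space) conv_in_prob_le:
  assumes "\<And>k. X k \<in> borel_measurable M" and "\<And>k. Y k \<in> borel_measurable M"
    and conv: "conv_in_prob M X a" "conv_in_prob M Y b"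
    and excess: "\<And>e. 0 < e \<Longrightarrow> (\<lambda>k. prob {\<omega> \<in> space M. e \<le> X k \<omega> - Y k \<omega>}) \<longlonglongrightarrow> 0"
  shows "a \<le> b"
proof (rule ccontr)
  assume "\<not> a \<le> b"
  define e where "e = (a - b) / 3"
  have "0 < e" and "3 * e = a - b"
    using \<open>\<not> a \<le> b\<close> by (simp_all add: e_def)
  define bad where "bad k = {\<omega> \<in> space M. e < \<bar>X k \<omega> - a\<bar>} \<union> {\<omega> \<in> space M. e < \<bar>Y k \<omega> - b\<bar>}
      \<union> {\<omega> \<in> space M. e \<le> X k \<omega> - Y k \<omega>}" for k
  have bad_events: "bad k \<in> events" for k
    unfolding bad_def using assms(1,2)[of k] by measurable
  have "(\<lambda>k. prob (bad k)) \<longlonglongrightarrow> 0"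
    unfolding bad_def using assms(1,2) conv excess[OF \<open>0 < e\<close>] \<open>0 < e\<close>
    by (intro tendsto_prob_Un_0) (auto simp: conv_in_prob_def)
  then have "\<exists>k. \<exists>\<omega>\<in>space M. \<omega> \<notin> bad k"
    by (intro ex_notin_if_prob_tendsto_0 bad_events)
  then obtain k \<omega> where "\<omega> \<in> space M" and "\<omega> \<notin> bad k"
    by blast
  then have "a - e \<le> X k \<omega>" and "Y k \<omega> \<le> b + e" and "X k \<omega> - Y k \<omega> < e"
    by (auto simp: bad_def not_less abs_le_iff)
  then show False
    using \<open>3 * e = a - b\<close> by linarith
qed

section \<open>Quantization cells\<close>

definition qcell :: "(nat \<Rightarrow> ereal) \<Rightarrow> nat \<Rightarrow> real set" where
  "qcell t j = {y. t j \<le> ereal y \<and> ereal y < t (Suc j)}"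

lemma qcell_borel [measurable]: "qcell t j \<in> sets borel"
  unfolding qcell_def by measurable

lemma thresholds_strict_mono:
  assumes "thresholds B t" and "j < k" and "k \<le> 2 ^ B"
  shows "t j < t k"
  using assms(2,3)
proof (induction k)
  case (Suc k)
  have "t k < t (Suc k)"
    using Suc.prems assms(1) by (auto simp: thresholds_def)
  with Suc show ?case
    by (cases "j = k") auto
qed simp

lemma thresholds_mono:
  assumes "thresholds B t" and "j \<le> k" and "k \<le> 2 ^ B"
  shows "t j \<le> t k"
  using thresholds_strict_mono[OF assms(1) _ assms(3), of j] assms(2) by (cases "j = k") auto

lemma qidx_eqI:
  assumes "thresholds B t" and "j < 2 ^ B" and "y \<in> qcell t j"
  shows "qidx B t y = j"
  unfolding qidx_def
proof (rule the_equality)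
  show "j < 2 ^ B \<and> t j \<le> ereal y \<and> ereal y < t (Suc j)"
    using assms(2,3) by (simp add: qcell_def)
  fix k assume k: "k < 2 ^ B \<and> t k \<le> ereal y \<and> ereal y < t (Suc k)"
  have "\<not> Suc k \<le> j"
    using thresholds_mono[OF assms(1), of "Suc k" j] assms k by (auto simp: qcell_def)
  moreover have "\<not> Suc j \<le> k"
    using thresholds_mono[OF assms(1), of "Suc j" k] assms k by (auto simp: qcell_def)
  ultimately show "k = j"
    by linarith
qed

lemma qidx_in_qcell:
  assumes "thresholds B t"
  shows "qidx B t y < 2 ^ B" and "y \<in> qcell t (qidx B t y)"
proof -
  define j where "j = (LEAST j. ereal y < t (Suc j))"
  have top: "ereal y < t (Suc (2 ^ B - 1))"
    using assms by (simp add: thresholds_def)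
  have j_less: "ereal y < t (Suc j)"
    unfolding j_def by (rule LeastI[of "\<lambda>j. ereal y < t (Suc j)", OF top])
  have "j \<le> 2 ^ B - 1"
    unfolding j_def by (rule Least_le[of "\<lambda>j. ereal y < t (Suc j)", OF top])
  moreover have "(0::nat) < 2 ^ B"
    by simp
  ultimately have j_lt: "j < 2 ^ B"
    by linarith
  have "t j \<le> ereal y"
  proof (cases j)
    case 0
    then show ?thesis
      using assms by (simp add: thresholds_def)
  next
    case (Suc i)
    then have "\<not> ereal y < t (Suc i)"
      using not_less_Least[of i "\<lambda>j. ereal y < t (Suc j)"] by (simp add: j_def)
    then show ?thesis
      using Suc by simp
  qed
  with j_less have "y \<in> qcell t j"
    by (simp add: qcell_def)
  with j_lt show "qidx B t y < 2 ^ B" and "y \<in> qcell t (qidx B t y)"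
    using qidx_eqI[OF assms j_lt] by auto
qed

lemma qidx_eq_sum_indicator:
  fixes g :: "nat \<Rightarrow> real"
  assumes "thresholds B t"
  shows "g (qidx B t y) = (\<Sum>j<2 ^ B. indicator (qcell t j) y * g j)"
proof -
  have indicator_qcell: "indicator (qcell t j) y = (if j = qidx B t y then 1 else 0)"
    if "j < 2 ^ B" for j
  proof (cases "y \<in> qcell t j")
    case True
    then show ?thesis
      using qidx_eqI[OF assms that True] by simp
  next
    case False
    then have "j \<noteq> qidx B t y"
      using qidx_in_qcell(2)[OF assms, of y] by blast
    with False show ?thesis
      by simp
  qed
  have "(\<Sum>j<2 ^ B. indicator (qcell t j) y * g j) = (\<Sum>j<2 ^ B. if j = qidx B t y then g j else 0)"
    by (intro sum.cong) (simp_all add: indicator_qcell)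
  also have "\<dots> = g (qidx B t y)"
    using qidx_in_qcell(1)[OF assms] by simp
  finally show ?thesis ..
qed

section \<open>Gaussian cell probabilities\<close>

definition cell_prob :: "real \<Rightarrow> (nat \<Rightarrow> ereal) \<Rightarrow> nat \<Rightarrow> real \<Rightarrow> real" where
  "cell_prob \<sigma> t j \<mu> =
     Phi_ext ((t (Suc j) - ereal \<mu>) / ereal \<sigma>) - Phi_ext ((t j - ereal \<mu>) / ereal \<sigma>)"

lemma Phi_ext_simps [simp]:
  "Phi_ext (ereal x) = Phi x" "Phi_ext \<infinity> = 1" "Phi_ext (-\<infinity>) = 0"
  by (auto simp: Phi_ext_def)

lemma Phi_ext_nonneg: "0 \<le> Phi_ext e"
  using Phi_pos by (cases e) (auto intro: less_imp_le)

lemma Phi_ext_strict_mono: "a < b \<Longrightarrow> Phi_ext a < Phi_ext b"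
  using Phi_pos Phi_less_1 Phi_strict_mono by (cases a; cases b) auto

lemma borel_measurable_Phi_ext [measurable]: "Phi_ext \<in> borel_measurable borel"
  unfolding Phi_ext_def by measurable

lemma borel_measurable_cell_prob [measurable]: "cell_prob \<sigma> t j \<in> borel_measurable borel"
  unfolding cell_prob_def by measurable

lemma ereal_diff_divide_pos:
  "0 < \<sigma> \<Longrightarrow> (e - ereal \<mu>) / ereal \<sigma> = e / ereal \<sigma> - ereal (\<mu> / \<sigma>)"
  by (cases e) (auto simp: diff_divide_distrib)

lemma ereal_diff_divide_strict_mono:
  "0 < \<sigma> \<Longrightarrow> a < b \<Longrightarrow> (a - ereal \<mu>) / ereal \<sigma> < (b - ereal \<mu>) / ereal \<sigma>"
  by (cases a; cases b) (auto simp: divide_strict_right_mono)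

lemma cell_prob_pos:
  assumes "thresholds B t" and "j < 2 ^ B" and "0 < \<sigma>"
  shows "0 < cell_prob \<sigma> t j \<mu>"
proof -
  have "t j < t (Suc j)"
    using assms(1,2) by (simp add: thresholds_def)
  then show ?thesis
    using Phi_ext_strict_mono[OF ereal_diff_divide_strict_mono[OF assms(3)]]
    by (simp add: cell_prob_def)
qed

lemma sum_cell_prob:
  assumes "thresholds B t" and "0 < \<sigma>"
  shows "(\<Sum>j<2 ^ B. cell_prob \<sigma> t j \<mu>) = 1"
proof -
  have "(\<Sum>j<2 ^ B. cell_prob \<sigma> t j \<mu>) =
      Phi_ext ((t (2 ^ B) - ereal \<mu>) / ereal \<sigma>) - Phi_ext ((t 0 - ereal \<mu>) / ereal \<sigma>)"
    unfolding cell_prob_def by (rule sum_lessThan_telescope)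
  then show ?thesis
    using assms by (simp add: thresholds_def)
qed

lemma concave_on_ln_cell_prob:
  assumes "t j < t (Suc j)" and "0 < \<sigma>"
  shows "concave_on UNIV (\<lambda>\<mu>. ln (cell_prob \<sigma> t j \<mu>))"
proof -
  have "t j / ereal \<sigma> < t (Suc j) / ereal \<sigma>"
    using ereal_diff_divide_strict_mono[OF assms(2,1), of 0] by simp
  moreover have "linear (\<lambda>\<mu>::real. \<mu> / \<sigma>)"
    by (rule linearI) (simp_all add: add_divide_distrib)
  ultimately have "concave_on UNIV (\<lambda>\<mu>. ln (Phi_ext (t (Suc j) / ereal \<sigma> - ereal (\<mu> / \<sigma>))
      - Phi_ext (t j / ereal \<sigma> - ereal (\<mu> / \<sigma>))))"
    by (rule concave_on_compose_linear[OF concave_on_ln_Phi_ext_diff])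
  then show ?thesis
    using assms(2) by (simp add: cell_prob_def ereal_diff_divide_pos)
qed

lemma emeasure_std_normal_lessThan: "emeasure (density lborel phi) {..<c} = ennreal (Phi c)"
proof -
  interpret real_distribution "density lborel phi"
    by (rule real_distribution_std_normal)
  have "measure (density lborel phi) {c} = 0"
    using isCont_cdf[of c] DERIV_isCont[OF DERIV_Phi] by (simp add: Phi_eq_cdf)
  moreover have "{..c} = {..<c} \<union> {c}"
    by auto
  ultimately have "measure (density lborel phi) {..<c} = Phi c"
    using finite_measure_Union[of "{..<c}" "{c}"] by (simp add: Phi_def)
  then show ?thesis
    by (simp add: emeasure_eq_measure)
qed

lemma (in prob_space) emeasure_normal_less:
  assumes "0 < \<sigma>" and X: "distributed M lborel X (normal_density \<mu> \<sigma>)"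
  shows "emeasure M {\<omega> \<in> space M. ereal (X \<omega>) < e} = ennreal (Phi_ext ((e - ereal \<mu>) / ereal \<sigma>))"
proof (cases e)
  case (real b)
  define Z where "Z = (\<lambda>\<omega>. (X \<omega> - \<mu>) / \<sigma>)"
  have Z: "distributed M lborel Z phi"
    using X normal_standard_normal_convert[OF assms(1)] by (simp add: Z_def)
  have "{\<omega> \<in> space M. ereal (X \<omega>) < e} = Z -` {..<(b - \<mu>) / \<sigma>} \<inter> space M"
    using assms(1) by (auto simp: real Z_def divide_less_cancel)
  then have "emeasure M {\<omega> \<in> space M. ereal (X \<omega>) < e} =
      emeasure (distr M lborel Z) {..<(b - \<mu>) / \<sigma>}"
    using distributed_measurable[OF Z] by (simp add: emeasure_distr)
  also have "\<dots> = ennreal (Phi ((b - \<mu>) / \<sigma>))"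
    using Z by (simp add: distributed_def emeasure_std_normal_lessThan)
  finally show ?thesis
    using assms(1) by (simp add: real)
next
  case PInf
  then show ?thesis
    using assms(1) emeasure_space_1 by simp
next
  case MInf
  then show ?thesis
    using assms(1) by simp
qed

lemma (in prob_space) emeasure_normal_qcell:
  assumes "0 < \<sigma>" and X: "distributed M lborel X (normal_density \<mu> \<sigma>)" and "t j \<le> t (Suc j)"
  shows "emeasure M {\<omega> \<in> space M. X \<omega> \<in> qcell t j} = ennreal (cell_prob \<sigma> t j \<mu>)"
proof -
  have [measurable]: "X \<in> borel_measurable M"
    using distributed_measurable[OF X] by simp
  have "{\<omega> \<in> space M. X \<omega> \<in> qcell t j} =
      {\<omega> \<in> space M. ereal (X \<omega>) < t (Suc j)} - {\<omega> \<in> space M. ereal (X \<omega>) < t j}"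
    by (auto simp: qcell_def not_less)
  moreover have "{\<omega> \<in> space M. ereal (X \<omega>) < t j} \<subseteq> {\<omega> \<in> space M. ereal (X \<omega>) < t (Suc j)}"
    using assms(3) by auto
  ultimately have "emeasure M {\<omega> \<in> space M. X \<omega> \<in> qcell t j} =
      emeasure M {\<omega> \<in> space M. ereal (X \<omega>) < t (Suc j)} -
      emeasure M {\<omega> \<in> space M. ereal (X \<omega>) < t j}"
    by (simp add: emeasure_Diff)
  then show ?thesis
    by (simp add: emeasure_normal_less[OF assms(1,2)] cell_prob_def ennreal_minus Phi_ext_nonneg)
qed

section \<open>The quantized log-likelihood\<close>

text \<open>One summand of \<open>ell_CV\<close>: the log-likelihood of the mean \<open>\<mu>\<close> of a Gaussian observation
  \<open>y\<close> with standard deviation \<open>\<sigma>\<close> of which only the quantization cell is known.\<close>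

definition qloglik :: "nat \<Rightarrow> (nat \<Rightarrow> ereal) \<Rightarrow> real \<Rightarrow> real \<Rightarrow> real \<Rightarrow> real" where
  "qloglik B t \<sigma> y \<mu> = ln (cell_prob \<sigma> t (qidx B t y) \<mu>)"

lemma concave_on_qloglik:
  assumes "thresholds B t" and "0 < \<sigma>"
  shows "concave_on UNIV (\<lambda>\<mu>. qloglik B t \<sigma> y \<mu>)"
  unfolding qloglik_def
  using assms qidx_in_qcell(1)[OF assms(1)]
  by (intro concave_on_ln_cell_prob) (auto simp: thresholds_def)

lemma qloglik_eq_sum_indicator:
  assumes "thresholds B t"
  shows "qloglik B t \<sigma> y \<mu> = (\<Sum>j<2 ^ B. indicator (qcell t j) y * ln (cell_prob \<sigma> t j \<mu>))"
  unfolding qloglik_def by (rule qidx_eq_sum_indicator[OF assms])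

lemma borel_measurable_qloglik [measurable (raw)]:
  assumes "thresholds B t" and "f \<in> borel_measurable M" and "g \<in> borel_measurable M"
  shows "(\<lambda>x. qloglik B t \<sigma> (f x) (g x)) \<in> borel_measurable M"
  unfolding qloglik_eq_sum_indicator[OF assms(1)] using assms(2,3) by measurable

lemma exp_qloglik_diff:
  assumes "thresholds B t" and "0 < \<sigma>"
  shows "exp (qloglik B t \<sigma> y \<mu>' - qloglik B t \<sigma> y \<mu>) =
    (\<Sum>j<2 ^ B. indicator (qcell t j) y * (cell_prob \<sigma> t j \<mu>' / cell_prob \<sigma> t j \<mu>))"
proof -
  have "exp (qloglik B t \<sigma> y \<mu>' - qloglik B t \<sigma> y \<mu>) =
      cell_prob \<sigma> t (qidx B t y) \<mu>' / cell_prob \<sigma> t (qidx B t y) \<mu>"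
    using cell_prob_pos[OF assms(1) qidx_in_qcell(1)[OF assms(1)] assms(2)]
    by (simp add: qloglik_def exp_diff)
  also have "\<dots> = (\<Sum>j<2 ^ B. indicator (qcell t j) y * (cell_prob \<sigma> t j \<mu>' / cell_prob \<sigma> t j \<mu>))"
    by (rule qidx_eq_sum_indicator[OF assms(1)])
  finally show ?thesis .
qed

lemma (in prob_space) nn_integral_exp_qloglik_diff:
  assumes th: "thresholds B t" and "0 < \<sigma>" and Y: "distributed M lborel Y (normal_density \<mu> \<sigma>)"
  shows "(\<integral>\<^sup>+\<omega>. ennreal (exp (qloglik B t \<sigma> (Y \<omega>) \<mu>' - qloglik B t \<sigma> (Y \<omega>) \<mu>)) \<partial>M) = 1"
proof -
  let ?p = "cell_prob \<sigma> t" and ?S = "\<lambda>j. {\<omega> \<in> space M. Y \<omega> \<in> qcell t j}"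
  have [measurable]: "Y \<in> borel_measurable M"
    using distributed_measurable[OF Y] by simp
  have pos: "0 < ?p j \<nu>" if "j < 2 ^ B" for j \<nu>
    using cell_prob_pos[OF th that assms(2)] .
  have "(\<integral>\<^sup>+\<omega>. ennreal (exp (qloglik B t \<sigma> (Y \<omega>) \<mu>' - qloglik B t \<sigma> (Y \<omega>) \<mu>)) \<partial>M) =
      (\<integral>\<^sup>+\<omega>. (\<Sum>j<2 ^ B. ennreal (?p j \<mu>' / ?p j \<mu>) * indicator (?S j) \<omega>) \<partial>M)"
  proof (rule nn_integral_cong)
    fix \<omega> assume "\<omega> \<in> space M"
    have "ennreal (exp (qloglik B t \<sigma> (Y \<omega>) \<mu>' - qloglik B t \<sigma> (Y \<omega>) \<mu>)) =
        (\<Sum>j<2 ^ B. ennreal (indicator (qcell t j) (Y \<omega>) * (?p j \<mu>' / ?p j \<mu>)))"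
      unfolding exp_qloglik_diff[OF th assms(2)] using pos
      by (intro sum_ennreal[symmetric])
         (auto intro!: mult_nonneg_nonneg divide_nonneg_nonneg intro: less_imp_le)
    also have "\<dots> = (\<Sum>j<2 ^ B. ennreal (?p j \<mu>' / ?p j \<mu>) * indicator (?S j) \<omega>)"
      using \<open>\<omega> \<in> space M\<close> by (intro sum.cong) (auto simp: indicator_def)
    finally show "ennreal (exp (qloglik B t \<sigma> (Y \<omega>) \<mu>' - qloglik B t \<sigma> (Y \<omega>) \<mu>)) =
        (\<Sum>j<2 ^ B. ennreal (?p j \<mu>' / ?p j \<mu>) * indicator (?S j) \<omega>)" .
  qed
  also have "\<dots> = (\<Sum>j<2 ^ B. ennreal (?p j \<mu>' / ?p j \<mu>) * emeasure M (?S j))"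
    by (subst nn_integral_sum) (auto simp: nn_integral_cmult_indicator)
  also have "\<dots> = (\<Sum>j<2 ^ B. ennreal (?p j \<mu>'))"
  proof (rule sum.cong)
    fix j :: nat assume "j \<in> {..<2 ^ B}"
    then have "t j \<le> t (Suc j)" and "0 < ?p j \<mu>" and "0 < ?p j \<mu>'"
      using th pos by (auto simp: thresholds_def intro: less_imp_le)
    then show "ennreal (?p j \<mu>' / ?p j \<mu>) * emeasure M (?S j) = ennreal (?p j \<mu>')"
      by (simp add: emeasure_normal_qcell[OF assms(2) Y] ennreal_mult[symmetric])
  qed simp
  also have "\<dots> = ennreal (\<Sum>j<2 ^ B. ?p j \<mu>')"
    using pos by (intro sum_ennreal) (auto intro: less_imp_le)
  also have "\<dots> = 1"
    by (simp add: sum_cell_prob[OF th assms(2)])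
  finally show ?thesis .
qed

definition cqloglik :: "nat \<Rightarrow> (nat \<Rightarrow> ereal) \<Rightarrow> real \<Rightarrow> complex \<Rightarrow> complex \<Rightarrow> real" where
  "cqloglik B t \<sigma> y \<mu> = qloglik B t \<sigma> (Re y) (Re \<mu>) + qloglik B t \<sigma> (Im y) (Im \<mu>)"

lemma (in prob_space) nn_integral_exp_cqloglik_diff:
  assumes th: "thresholds B t" and \<sigma>: "0 < \<sigma>"
    and ind: "indep_var borel (\<lambda>\<omega>. Re (W \<omega>)) borel (\<lambda>\<omega>. Im (W \<omega>))"
    and Re: "distributed M lborel (\<lambda>\<omega>. Re (W \<omega>)) (normal_density 0 \<sigma>)"
    and Im: "distributed M lborel (\<lambda>\<omega>. Im (W \<omega>)) (normal_density 0 \<sigma>)"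
  shows "(\<integral>\<^sup>+\<omega>. ennreal (exp (cqloglik B t \<sigma> (s + W \<omega>) s' - cqloglik B t \<sigma> (s + W \<omega>) s)) \<partial>M) = 1"
proof -
  define E1 where "E1 x = exp (qloglik B t \<sigma> (Re s + x) (Re s') - qloglik B t \<sigma> (Re s + x) (Re s))"
    for x
  define E2 where "E2 x = exp (qloglik B t \<sigma> (Im s + x) (Im s') - qloglik B t \<sigma> (Im s + x) (Im s))"
    for x
  have [measurable]: "E1 \<in> borel_measurable borel" "E2 \<in> borel_measurable borel"
    unfolding E1_def E2_def using th by measurable
  have [measurable]: "(\<lambda>\<omega>. Im (W \<omega>)) \<in> borel_measurable M"
    using ind by (auto dest: indep_var_rv2)
  have "distributed M lborel (\<lambda>\<omega>. Re s + Re (W \<omega>)) (normal_density (Re s) \<sigma>)"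
    using normal_density_affine[OF Re \<sigma>, of 1 "Re s"] by simp
  then have E1_mean: "(\<integral>\<^sup>+\<omega>. ennreal (E1 (Re (W \<omega>))) \<partial>M) = 1"
    unfolding E1_def by (rule nn_integral_exp_qloglik_diff[OF th \<sigma>])
  have "distributed M lborel (\<lambda>\<omega>. Im s + Im (W \<omega>)) (normal_density (Im s) \<sigma>)"
    using normal_density_affine[OF Im \<sigma>, of 1 "Im s"] by simp
  then have E2_mean: "(\<integral>\<^sup>+\<omega>. ennreal (E2 (Im (W \<omega>))) \<partial>M) = 1"
    unfolding E2_def by (rule nn_integral_exp_qloglik_diff[OF th \<sigma>])
  have "(\<integral>\<^sup>+\<omega>. ennreal (exp (cqloglik B t \<sigma> (s + W \<omega>) s' - cqloglik B t \<sigma> (s + W \<omega>) s)) \<partial>M) =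
      (\<integral>\<^sup>+\<omega>. (\<lambda>(x, y). ennreal (E1 x) * ennreal (E2 y)) (Re (W \<omega>), Im (W \<omega>)) \<partial>M)"
    by (simp add: cqloglik_def E1_def E2_def exp_add[symmetric] ennreal_mult[symmetric]
        algebra_simps)
  also have "\<dots> = (\<integral>\<^sup>+\<omega>. (\<integral>\<^sup>+\<omega>'. ennreal (E1 (Re (W \<omega>))) * ennreal (E2 (Im (W \<omega>'))) \<partial>M) \<partial>M)"
    by (subst nn_integral_indep_var[OF ind]) simp_all
  also have "\<dots> = (\<integral>\<^sup>+\<omega>. ennreal (E1 (Re (W \<omega>))) \<partial>M)"
    by (simp add: nn_integral_cmult E2_mean)
  finally show ?thesis
    using E1_mean by simp
qed

section \<open>The CV function\<close>

definition dotu :: "complex ^ 'n \<Rightarrow> complex ^ 'n \<Rightarrow> complex" where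
  "dotu a x = (\<Sum>j\<in>UNIV. a $ j * x $ j)"

lemma dotu_add: "dotu a (x + y) = dotu a x + dotu a y"
  by (simp add: dotu_def distrib_left sum.distrib)

lemma dotu_scaleR: "dotu a (c *\<^sub>R x) = c *\<^sub>R dotu a x"
  by (simp add: dotu_def scaleR_sum_right)

lemma linear_Re_dotu: "linear (\<lambda>x. Re (dotu a x))"
  and linear_Im_dotu: "linear (\<lambda>x. Im (dotu a x))"
  by (auto intro!: linearI simp: dotu_add dotu_scaleR)

lemma borel_measurable_dotu [measurable]: "(\<lambda>a. dotu a x) \<in> borel_measurable borel"
  unfolding dotu_def by (intro borel_measurable_continuous_onI continuous_intros)

lemma borel_measurable_vec:
  fixes f :: "'a \<Rightarrow> 'b::euclidean_space ^ 'n"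
  assumes "\<And>j. (\<lambda>x. f x $ j) \<in> borel_measurable M"
  shows "f \<in> borel_measurable M"
proof (rule borel_measurable_euclidean_space[THEN iffD2], rule ballI)
  fix b :: "'b ^ 'n" assume "b \<in> Basis"
  then obtain j u where "b = axis j u"
    unfolding Basis_vec_def by blast
  then show "(\<lambda>x. f x \<bullet> b) \<in> borel_measurable M"
    by (simp add: inner_axis borel_measurable_inner[OF assms measurable_const])
qed

lemma sum_UNIV_Plus:
  "(\<Sum>k\<in>UNIV. f k) = (\<Sum>j\<in>UNIV. f (Inl j)) + (\<Sum>j\<in>UNIV. f (Inr j))"
  for f :: "'a::finite + 'b::finite \<Rightarrow> 'c::comm_monoid_add"
  by (subst UNIV_Plus_UNIV[symmetric], subst sum.Plus) (auto simp: comp_def)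

lemma rowR_inner_vecR:
  "rowR A (Inl i) \<bullet> vecR x = Re (dotu (A i) x)"
  "rowR A (Inr i) \<bullet> vecR x = Im (dotu (A i) x)"
  by (simp_all add: inner_vec_def sum_UNIV_Plus rowR_def vecR_def dotu_def Re_sum Im_sum
      sum_subtractf sum.distrib[symmetric] algebra_simps)

lemma ell_CV_eq_sum_cqloglik:
  assumes "finite CV"
  shows "ell_CV B t CV A v h hh =
    (\<Sum>i\<in>CV. cqloglik B t (sqrt (1/2)) (dotu (A i) h + v i) (dotu (A i) hh))"
proof -
  have "Inl ` CV \<inter> Inr ` CV = {}"
    by auto
  with assms show ?thesis
    unfolding ell_CV_def Let_def
    by (simp add: sum.union_disjoint sum.reindex sum.distrib rowR_inner_vecR seqR_def cqloglik_def
        qloglik_def cell_prob_def q_up_def q_lo_def)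
qed

lemma concave_on_ell_CV:
  assumes "thresholds B t" and "finite CV"
  shows "concave_on UNIV (\<lambda>hh. ell_CV B t CV A v h hh)"
  unfolding ell_CV_eq_sum_cqloglik[OF assms(2)] cqloglik_def
  using assms(1)
  by (intro concave_on_sum_fun concave_on_add convex_UNIV
      concave_on_compose_linear[OF concave_on_qloglik linear_Re_dotu]
      concave_on_compose_linear[OF concave_on_qloglik linear_Im_dotu]) simp_all

lemma (in prob_space) indep_vars_rows:
  fixes A :: "'a \<Rightarrow> nat \<Rightarrow> 'b::euclidean_space ^ 'n" and v :: "'a \<Rightarrow> nat \<Rightarrow> 'b"
  assumes "indep_vars (\<lambda>_. borel) (\<lambda>x \<omega>. case x of Inl (i, j) \<Rightarrow> A \<omega> i $ j | Inr i \<Rightarrow> v \<omega> i) UNIV"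
  shows "indep_vars (\<lambda>_. borel \<Otimes>\<^sub>M borel) (\<lambda>i \<omega>. (A \<omega> i, v \<omega> i)) UNIV"
proof -
  define X where "X = (\<lambda>x \<omega>. case x of Inl (i, j) \<Rightarrow> A \<omega> i $ j | Inr i \<Rightarrow> v \<omega> i)"
  define K :: "nat \<Rightarrow> (nat \<times> 'n + nat) set" where "K i = range (\<lambda>j. Inl (i, j)) \<union> {Inr i}" for i
  define row where "row i g = ((\<chi> j. g (Inl (i, j))), g (Inr i))"
    for i and g :: "nat \<times> 'n + nat \<Rightarrow> 'b"
  have "indep_vars (\<lambda>i. PiM (K i) (\<lambda>_. borel)) (\<lambda>i \<omega>. restrict (\<lambda>k. X k \<omega>) (K i)) UNIV"
    using assms unfolding X_def[symmetric]
    by (rule indep_vars_restrict) (auto simp: K_def disjoint_family_on_def)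
  moreover have "row i \<in> PiM (K i) (\<lambda>_. borel) \<rightarrow>\<^sub>M borel \<Otimes>\<^sub>M borel" for i
    unfolding row_def
    by (intro measurable_Pair borel_measurable_vec measurable_component_singleton)
       (simp_all add: K_def)
  ultimately have "indep_vars (\<lambda>_. borel \<Otimes>\<^sub>M borel) (\<lambda>i \<omega>. row i (restrict (\<lambda>k. X k \<omega>) (K i))) UNIV"
    by (rule indep_vars_compose2)
  then show ?thesis
    by (simp add: row_def X_def K_def)
qed

lemma (in prob_space) nn_integral_row_noise:
  fixes A :: "'a \<Rightarrow> nat \<Rightarrow> 'b::euclidean_space ^ 'n" and v :: "'a \<Rightarrow> nat \<Rightarrow> 'b"
  assumes "indep_vars (\<lambda>_. borel) (\<lambda>x \<omega>. case x of Inl (i, j) \<Rightarrow> A \<omega> i $ j | Inr i \<Rightarrow> v \<omega> i) UNIV"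
    and G: "G \<in> borel_measurable (borel \<Otimes>\<^sub>M borel)"
  shows "(\<integral>\<^sup>+\<omega>. G (A \<omega> i, v \<omega> i) \<partial>M) = (\<integral>\<^sup>+\<omega>. (\<integral>\<^sup>+\<omega>'. G (A \<omega> i, v \<omega>' i) \<partial>M) \<partial>M)"
proof -
  define X where "X = (\<lambda>x \<omega>. case x of Inl (i, j) \<Rightarrow> A \<omega> i $ j | Inr i \<Rightarrow> v \<omega> i)"
  define R :: "(nat \<times> 'n + nat) set" where "R = range (\<lambda>j. Inl (i, j))"
  define F where "F p = G ((\<chi> j. fst p (Inl (i, j))), snd p (Inr i))"
    for p :: "(nat \<times> 'n + nat \<Rightarrow> 'b) \<times> (nat \<times> 'n + nat \<Rightarrow> 'b)"
  have "indep_var (PiM R (\<lambda>_. borel)) (\<lambda>\<omega>. restrict (\<lambda>k. X k \<omega>) R)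
      (PiM {Inr i} (\<lambda>_. borel)) (\<lambda>\<omega>. restrict (\<lambda>k. X k \<omega>) {Inr i})"
    using assms(1) unfolding X_def[symmetric]
    by (rule indep_var_restrict) (auto simp: R_def)
  moreover have "F \<in> borel_measurable (PiM R (\<lambda>_. borel) \<Otimes>\<^sub>M PiM {Inr i} (\<lambda>_. borel))"
  proof -
    have row: "(\<lambda>g :: nat \<times> 'n + nat \<Rightarrow> 'b. \<chi> j. g (Inl (i, j)))
        \<in> borel_measurable (PiM R (\<lambda>_. borel))"
      by (rule borel_measurable_vec) (simp add: R_def measurable_component_singleton)
    have noise: "(\<lambda>g :: nat \<times> 'n + nat \<Rightarrow> 'b. g (Inr i))
        \<in> borel_measurable (PiM {Inr i} (\<lambda>_. borel))"
      by (simp add: measurable_component_singleton)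
    show ?thesis
      unfolding F_def
      by (rule measurable_compose[OF measurable_Pair[OF measurable_compose[OF measurable_fst row]
            measurable_compose[OF measurable_snd noise]] G])
  qed
  ultimately have "(\<integral>\<^sup>+\<omega>. F (restrict (\<lambda>k. X k \<omega>) R, restrict (\<lambda>k. X k \<omega>) {Inr i}) \<partial>M) =
      (\<integral>\<^sup>+\<omega>. (\<integral>\<^sup>+\<omega>'. F (restrict (\<lambda>k. X k \<omega>) R, restrict (\<lambda>k. X k \<omega>') {Inr i}) \<partial>M) \<partial>M)"
    by (rule nn_integral_indep_var)
  moreover have "F (restrict (\<lambda>k. X k \<omega>) R, restrict (\<lambda>k. X k \<omega>') {Inr i}) = G (A \<omega> i, v \<omega>' i)"
    for \<omega> \<omega>'
    by (simp add: F_def X_def R_def)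
  ultimately show ?thesis
    by simp
qed

locale cv_model = prob_space M
  for M :: "'a measure" and A :: "'a \<Rightarrow> nat \<Rightarrow> complex ^ 'n" and v :: "'a \<Rightarrow> nat \<Rightarrow> complex" +
  assumes indep_entries:
      "indep_vars (\<lambda>_. borel) (\<lambda>x \<omega>. case x of Inl (i, j) \<Rightarrow> A \<omega> i $ j | Inr i \<Rightarrow> v \<omega> i) UNIV"
    and indep_Re_Im: "\<And>i. indep_var borel (\<lambda>\<omega>. Re (v \<omega> i)) borel (\<lambda>\<omega>. Im (v \<omega> i))"
    and distributed_Re: "\<And>i. distributed M lborel (\<lambda>\<omega>. Re (v \<omega> i)) (normal_density 0 (sqrt (1/2)))"
    and distributed_Im: "\<And>i. distributed M lborel (\<lambda>\<omega>. Im (v \<omega> i)) (normal_density 0 (sqrt (1/2)))"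
begin

lemma borel_measurable_ell_CV:
  assumes "thresholds B t" and "finite CV"
  shows "(\<lambda>\<omega>. ell_CV B t CV (A \<omega>) (v \<omega>) h hh) \<in> borel_measurable M"
proof -
  have entry: "(\<lambda>\<omega>. case x of Inl (i, j) \<Rightarrow> A \<omega> i $ j | Inr i \<Rightarrow> v \<omega> i) \<in> borel_measurable M" for x
    using indep_entries by (simp add: indep_vars_def)
  have "(\<lambda>\<omega>. A \<omega> i $ j) \<in> borel_measurable M" "(\<lambda>\<omega>. v \<omega> i) \<in> borel_measurable M" for i j
    using entry[of "Inl (i, j)"] entry[of "Inr i"] by simp_all
  then have [measurable]: "(\<lambda>\<omega>. A \<omega> i) \<in> borel_measurable M" "(\<lambda>\<omega>. v \<omega> i) \<in> borel_measurable M"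
    for i
    by (auto intro: borel_measurable_vec)
  show ?thesis
    unfolding ell_CV_eq_sum_cqloglik[OF assms(2)] cqloglik_def using assms(1) by measurable
qed

lemma nn_integral_exp_ell_CV_diff:
  assumes th: "thresholds B t" and fin: "finite CV"
  shows "(\<integral>\<^sup>+\<omega>. ennreal (exp (ell_CV B t CV (A \<omega>) (v \<omega>) h hh - ell_CV B t CV (A \<omega>) (v \<omega>) h h)) \<partial>M)
    = 1"
proof -
  define G where "G p = ennreal (exp
      (cqloglik B t (sqrt (1/2)) (dotu (fst p) h + snd p) (dotu (fst p) hh)
       - cqloglik B t (sqrt (1/2)) (dotu (fst p) h + snd p) (dotu (fst p) h)))"
    for p :: "(complex ^ 'n) \<times> complex"
  have G [measurable]: "G \<in> borel_measurable (borel \<Otimes>\<^sub>M borel)"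
    unfolding G_def cqloglik_def using th by measurable
  have "(\<integral>\<^sup>+\<omega>. ennreal (exp (ell_CV B t CV (A \<omega>) (v \<omega>) h hh - ell_CV B t CV (A \<omega>) (v \<omega>) h h)) \<partial>M) =
      (\<integral>\<^sup>+\<omega>. (\<Prod>i\<in>CV. G (A \<omega> i, v \<omega> i)) \<partial>M)"
    by (simp add: ell_CV_eq_sum_cqloglik[OF fin] G_def sum_subtractf[symmetric] exp_sum[OF fin]
        prod_ennreal)
  also have "\<dots> = (\<Prod>i\<in>CV. \<integral>\<^sup>+\<omega>. G (A \<omega> i, v \<omega> i) \<partial>M)"
  proof (rule indep_vars_nn_integral[OF fin])
    have "indep_vars (\<lambda>_. borel) (\<lambda>i \<omega>. G (A \<omega> i, v \<omega> i)) UNIV"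
      by (rule indep_vars_compose2[OF indep_vars_rows[OF indep_entries], where Y = "\<lambda>_. G"]) simp
    then show "indep_vars (\<lambda>_. borel) (\<lambda>i \<omega>. G (A \<omega> i, v \<omega> i)) CV"
      by (rule indep_vars_subset) simp
  qed simp
  also have "\<dots> = (\<Prod>i\<in>CV. 1)"
  proof (rule prod.cong)
    fix i
    have "(\<integral>\<^sup>+\<omega>. G (A \<omega> i, v \<omega> i) \<partial>M) = (\<integral>\<^sup>+\<omega>. (\<integral>\<^sup>+\<omega>'. G (A \<omega> i, v \<omega>' i) \<partial>M) \<partial>M)"
      by (rule nn_integral_row_noise[OF indep_entries G])
    also have "\<dots> = (\<integral>\<^sup>+\<omega>. 1 \<partial>M)"
      unfolding G_def fst_conv snd_conv
      by (intro nn_integral_cong nn_integral_exp_cqloglik_diff[OF th _ indep_Re_Im distributed_Re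
          distributed_Im]) simp
    finally show "(\<integral>\<^sup>+\<omega>. G (A \<omega> i, v \<omega> i) \<partial>M) = 1"
      by (simp add: emeasure_space_1)
  qed simp
  finally show ?thesis
    by simp
qed

lemma prob_ell_CV_excess_le:
  assumes th: "thresholds B t" and fin: "finite CV" and "0 < N"
  shows "prob {\<omega> \<in> space M.
      e \<le> ell_CV B t CV (A \<omega>) (v \<omega>) h hh / N - ell_CV B t CV (A \<omega>) (v \<omega>) h h / N}
    \<le> exp (- (N * e))"
proof -
  define D where "D \<omega> = ell_CV B t CV (A \<omega>) (v \<omega>) h hh - ell_CV B t CV (A \<omega>) (v \<omega>) h h" for \<omega>
  have [measurable]: "D \<in> borel_measurable M"
    unfolding D_def using borel_measurable_ell_CV[OF th fin] by measurable
  have "{\<omega> \<in> space M. e \<le> ell_CV B t CV (A \<omega>) (v \<omega>) h hh / N - ell_CV B t CV (A \<omega>) (v \<omega>) h h / N} =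
      {\<omega> \<in> space M. N * e \<le> D \<omega>}"
    using \<open>0 < N\<close> by (auto simp: D_def diff_divide_distrib[symmetric] pos_le_divide_eq mult.commute)
  also have "emeasure M \<dots> \<le> ennreal (exp (- (N * e))) * (\<integral>\<^sup>+\<omega>. ennreal (exp (D \<omega>)) \<partial>M)"
    by (rule emeasure_ge_le_exp_nn_integral) measurable
  also have "(\<integral>\<^sup>+\<omega>. ennreal (exp (D \<omega>)) \<partial>M) = 1"
    unfolding D_def by (rule nn_integral_exp_ell_CV_diff[OF th fin])
  finally show ?thesis
    by (simp add: emeasure_eq_measure)
qed

lemma conv_in_prob_ell_CV_le:
  assumes th: "thresholds B t" and fin: "\<And>k. finite (CV k)"
    and card: "filterlim (\<lambda>k. card (CV k)) at_top sequentially"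
    and conv: "\<And>x. conv_in_prob M
      (\<lambda>k \<omega>. ell_CV B t (CV k) (A \<omega>) (v \<omega>) h x / (2 * real (card (CV k)))) (f x)"
  shows "f hh \<le> f h"
proof -
  let ?N = "\<lambda>k. 2 * real (card (CV k))"
  have X: "(\<lambda>\<omega>. ell_CV B t (CV k) (A \<omega>) (v \<omega>) h x / ?N k) \<in> borel_measurable M" for k x
    using borel_measurable_ell_CV[OF th fin] by measurable
  show ?thesis
  proof (rule conv_in_prob_le[OF X X conv conv])
    fix e :: real assume "0 < e"
    have "filterlim (\<lambda>k. real (card (CV k))) at_top sequentially"
      using filterlim_compose[OF filterlim_real_sequentially card] by (simp add: o_def)
    from exp_neg_mult_tendsto_0[OF this, of "2 * e"]
    have exp_lim: "(\<lambda>k. exp (- (?N k * e))) \<longlonglongrightarrow> 0"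
      using \<open>0 < e\<close> by (simp add: mult_ac)
    have "\<forall>\<^sub>F k in sequentially. 1 \<le> card (CV k)"
      using card unfolding filterlim_at_top by blast
    then have "\<forall>\<^sub>F k in sequentially. 0 < ?N k"
      by eventually_elim simp
    then have bound: "\<forall>\<^sub>F k in sequentially. prob {\<omega> \<in> space M.
        e \<le> ell_CV B t (CV k) (A \<omega>) (v \<omega>) h hh / ?N k - ell_CV B t (CV k) (A \<omega>) (v \<omega>) h h / ?N k}
        \<le> exp (- (?N k * e))"
      by eventually_elim (rule prob_ell_CV_excess_le[OF th fin])
    show "(\<lambda>k. prob {\<omega> \<in> space M.
        e \<le> ell_CV B t (CV k) (A \<omega>) (v \<omega>) h hh / ?N k - ell_CV B t (CV k) (A \<omega>) (v \<omega>) h h / ?N k})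
        \<longlonglongrightarrow> 0"
      by (rule tendsto_sandwich[OF _ bound tendsto_const exp_lim]) simp
  qed
qed

end

theorem lemma1:
  fixes M :: "'w measure"
    and A :: "'w \<Rightarrow> nat \<Rightarrow> complex ^ 'n"
    and v :: "'w \<Rightarrow> nat \<Rightarrow> complex"
    and h :: "complex ^ 'n"
    and B :: nat and t :: "nat \<Rightarrow> ereal"
    and CV :: "nat \<Rightarrow> nat set"
    and f :: "complex ^ 'n \<Rightarrow> real"
  assumes "prob_space M"
    and "0 < B" and "thresholds B t"
    \<comment> \<open>all entries of A and v are random variables, jointly independent
        (A has independent entries, v has independent entries, v independent of A)\<close>
    and "\<forall>i j. (\<lambda>\<omega>. A \<omega> i $ j) \<in> borel_measurable M"
    and "\<forall>i. (\<lambda>\<omega>. v \<omega> i) \<in> borel_measurable M"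
    and "prob_space.indep_vars M (\<lambda>_. borel)
           (\<lambda>x \<omega>. case x of Inl (i, j) \<Rightarrow> A \<omega> i $ j | Inr i \<Rightarrow> v \<omega> i) UNIV"
    \<comment> \<open>entries of A identically distributed, zero mean, unit variance\<close>
    and "\<forall>i j i' j'. distr M borel (\<lambda>\<omega>. A \<omega> i $ j) = distr M borel (\<lambda>\<omega>. A \<omega> i' $ j')"
    and "\<forall>i j. integrable M (\<lambda>\<omega>. A \<omega> i $ j)"
    and "\<forall>i j. (\<integral>\<omega>. A \<omega> i $ j \<partial>M) = 0"
    and "\<forall>i j. (\<integral>\<omega>. (cmod (A \<omega> i $ j))\<^sup>2 \<partial>M) = 1"
    and "\<forall>i j. integrable M (\<lambda>\<omega>. (cmod (A \<omega> i $ j))\<^sup>2)"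
    \<comment> \<open>v_i ~ CN(0,1): independent real and imaginary parts, each N(0, 1/2)\<close>
    and "\<forall>i. prob_space.indep_var M borel (\<lambda>\<omega>. Re (v \<omega> i)) borel (\<lambda>\<omega>. Im (v \<omega> i))"
    and "\<forall>i. distributed M lborel (\<lambda>\<omega>. Re (v \<omega> i)) (normal_density 0 (sqrt (1/2)))"
    and "\<forall>i. distributed M lborel (\<lambda>\<omega>. Im (v \<omega> i)) (normal_density 0 (sqrt (1/2)))"
    \<comment> \<open>a sequence of finite index sets CV with |CV| \<rightarrow> \<infinity>\<close>
    and "\<forall>k. finite (CV k)"
    and "filterlim (\<lambda>k. card (CV k)) at_top sequentially"
    \<comment> \<open>f is the limit in probability of (1/(2|CV|)) ell_CV(hh)\<close>
    and "\<forall>hh. conv_in_prob M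
           (\<lambda>k \<omega>. ell_CV B t (CV k) (A \<omega>) (v \<omega>) h hh / (2 * real (card (CV k)))) (f hh)"
  shows "concave_on UNIV f \<and> (\<forall>hh. f hh \<le> f h)"
proof -
  interpret cv_model M A v
    using assms(1,6,12-14) by (simp add: cv_model_def cv_model_axioms_def)
  note th = assms(3) and fin = assms(15)[rule_format]
  let ?X = "\<lambda>k \<omega> hh. ell_CV B t (CV k) (A \<omega>) (v \<omega>) h hh / (2 * real (card (CV k)))"
  have "concave_on UNIV f"
  proof (rule concave_on_conv_in_prob[where X = ?X])
    show "(\<lambda>\<omega>. ?X k \<omega> hh) \<in> borel_measurable M" for k hh
      using borel_measurable_ell_CV[OF th fin] by measurable
    show "concave_on UNIV (?X k \<omega>)" for k \<omega>
      by (intro concave_on_cdiv concave_on_ell_CV th fin) simp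
  qed (use assms(17) in blast)
  moreover have "f hh \<le> f h" for hh
    using assms(16,17) by (intro conv_in_prob_ell_CV_le[OF th fin]) auto
  ultimately show ?thesis
    by blast
qed

end
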